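(* If $P$ is a simple closed $n$-gon ($n\ge3$) in $\mathbb{R}^2$, then $\mathrm{poldiam}(\mathrm{int}P)\le\lfloor n/2\rfloor+3$ and $\mathrm{poldiam}(\mathrm{ext}P)\le\lfloor n/2\rfloor+3$.
   Context: A simple closed $n$-gon is $P=\bigcup_{i=1}^n[p_{i-1},p_i]$ with distinct vertices $p_0,\dots,p_{n-1}$, $p_n=p_0$, whose edges meet only in common endpoints of consecutive edges. $\mathbb{R}^2\setminus P$ is the disjoint union of the bounded open set $\mathrm{int}P$ and the unbounded open set $\mathrm{ext}P$ (its two components). For $S\subset\mathbb{R}^2$ and $a,b\in S$, $\pi_S(a,b)$ is the smallest number of edges of a polygonal path connecting $a$ to $b$ within $S$ ($\infty$ if none exists), and $\mathrm{poldiam}(S)=\sup\{\pi_S(a,b):a,b\in S\}$. *)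

theory Defs
  imports "HOL-Analysis.Analysis" "HOL-Library.Extended_Nat"
begin

definition poly_edge :: "nat \<Rightarrow> (nat \<Rightarrow> real^2) \<Rightarrow> nat \<Rightarrow> (real^2) set" where
  "poly_edge n p i = closed_segment (p i) (p (Suc i mod n))"

definition polygon :: "nat \<Rightarrow> (nat \<Rightarrow> real^2) \<Rightarrow> (real^2) set" where
  "polygon n p = (\<Union>i<n. poly_edge n p i)"

definition simple_closed_polygon :: "nat \<Rightarrow> (nat \<Rightarrow> real^2) \<Rightarrow> bool" where
  "simple_closed_polygon n p \<longleftrightarrow>
     inj_on p {..<n} \<and>
     (\<forall>i<n. \<forall>j<n. i \<noteq> j \<longrightarrow>
        poly_edge n p i \<inter> poly_edge n p j =
          (if j = Suc i mod n then {p j}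
           else if i = Suc j mod n then {p i}
           else {}))"

definition polygonal_path_in :: "'a::real_vector set \<Rightarrow> 'a \<Rightarrow> 'a \<Rightarrow> nat \<Rightarrow> bool" where
  "polygonal_path_in S a b k \<longleftrightarrow>
     (\<exists>q::nat \<Rightarrow> 'a. q 0 = a \<and> q k = b \<and> (\<forall>i<k. closed_segment (q i) (q (Suc i)) \<subseteq> S))"

text \<open>pi_S(a,b): least number of edges, infinity if none.\<close>
definition polydist :: "'a::real_vector set \<Rightarrow> 'a \<Rightarrow> 'a \<Rightarrow> enat" where
  "polydist S a b = (INF k\<in>{k. polygonal_path_in S a b k}. enat k)"

definition poldiam :: "'a::real_vector set \<Rightarrow> enat" where
  "poldiam S = (SUP a\<in>S. SUP b\<in>S. polydist S a b)"

end

theory Submission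
  imports Defs
begin

text \<open>Push the polygon off itself along the angle bisectors at its vertices, by the same small
amount to either side. This gives two closed polygonal chains avoiding \<open>P\<close>, so each lies in
a single component of the complement. Every point off \<open>P\<close> sees, by one segment, a point from
which both endpoints of some edge of one of the two chains are visible. Since the complement of
\<open>P\<close> is disconnected (Jordan), the two chains lie in different components, which are therefore
\<open>int P\<close> and \<open>ext P\<close>. Two points of the same component are joined through their chain: two
segments to reach it, at most \<open>\<lfloor>n/2\<rfloor> - 1\<close> of its edges going round the shorter way, and two
segments to leave it.\<close>

section \<open>Polygonal paths\<close>

lemma polygonal_path_in_segment: "closed_segment a b \<subseteq> S \<Longrightarrow> polygonal_path_in S a b 1"
  unfolding polygonal_path_in_def by (intro exI[of _ "\<lambda>i. if i = 0 then a else b"]) auto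

lemma polygonal_path_in_chain:
  "(\<And>i. i < m \<Longrightarrow> closed_segment (f i) (f (Suc i)) \<subseteq> S) \<Longrightarrow> polygonal_path_in S (f 0) (f m) m"
  unfolding polygonal_path_in_def by (intro exI[of _ f]) auto

lemma polygonal_path_in_trans:
  assumes "polygonal_path_in S a b k" "polygonal_path_in S b c l"
  shows "polygonal_path_in S a c (k + l)"
proof -
  obtain q where q: "q 0 = a" "q k = b" "\<And>i. i < k \<Longrightarrow> closed_segment (q i) (q (Suc i)) \<subseteq> S"
    using assms(1) unfolding polygonal_path_in_def by blast
  obtain r where r: "r 0 = b" "r l = c" "\<And>i. i < l \<Longrightarrow> closed_segment (r i) (r (Suc i)) \<subseteq> S"
    using assms(2) unfolding polygonal_path_in_def by blast
  define z where "z i = (if i \<le> k then q i else r (i - k))" for i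
  have "closed_segment (z i) (z (Suc i)) \<subseteq> S" if i: "i < k + l" for i
  proof (cases "i < k")
    case True
    then show ?thesis using q(3)[OF True] unfolding z_def by auto
  next
    case False
    then have "i - k < l" "Suc i - k = Suc (i - k)" using i by auto
    moreover have "z i = r (i - k)" using False q(2) r(1) unfolding z_def by (cases "i = k") auto
    ultimately show ?thesis using r(3) False unfolding z_def by auto
  qed
  moreover have "z 0 = a" "z (k + l) = c" using q r unfolding z_def by auto
  ultimately show ?thesis unfolding polygonal_path_in_def by blast
qed

lemma polygonal_path_in_le:
  assumes "polygonal_path_in S a b k" "b \<in> S" "k \<le> K"
  shows "polygonal_path_in S a b K"
proof -
  have "polygonal_path_in S b b (K - k)"
    unfolding polygonal_path_in_def using assms(2) by (intro exI[of _ "\<lambda>i. b"]) auto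
  then show ?thesis using polygonal_path_in_trans[OF assms(1)] assms(3) by fastforce
qed

lemma polydist_le: "polygonal_path_in S a b k \<Longrightarrow> polydist S a b \<le> enat k"
  unfolding polydist_def by (rule INF_lower) simp

lemma poldiam_le: "(\<And>a b. a \<in> S \<Longrightarrow> b \<in> S \<Longrightarrow> polydist S a b \<le> B) \<Longrightarrow> poldiam S \<le> B"
  unfolding poldiam_def by (intro SUP_least) auto

lemma mod_add_distance:
  assumes "0 < (n::nat)"
  obtains D where "D < n" "(i + D) mod n = j mod n"
proof
  define D where "D = (j mod n + n - i mod n) mod n"
  show "D < n" unfolding D_def using assms by simp
  have "(i + D) mod n = (i mod n + (j mod n + n - i mod n)) mod n"
    unfolding D_def by (simp add: mod_add_left_eq mod_add_right_eq)
  also have "i mod n + (j mod n + n - i mod n) = j mod n + n"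
    using mod_less_divisor[OF assms, of i] by arith
  finally show "(i + D) mod n = j mod n" by simp
qed

lemma polygonal_path_in_cyclic:
  fixes W :: "nat \<Rightarrow> 'a::real_vector"
  assumes "2 \<le> n"
    and segs: "\<And>k. closed_segment (W k) (W (Suc k)) \<subseteq> S"
    and periodic: "\<And>i j. i mod n = j mod n \<Longrightarrow> W i = W j"
  obtains i' j' m where "i' = i \<or> i' = Suc i" "j' = j \<or> j' = Suc j" "m + 1 \<le> n div 2"
    "polygonal_path_in S (W i') (W j') m"
proof -
  obtain D where D: "D < n" "(i + D) mod n = j mod n"
    using mod_add_distance[of n i j] assms(1) by auto
  consider (zero) "D = 0" | (forward) "1 \<le> D" "D \<le> n div 2" | (backward) "n div 2 < D" by linarith
  then show ?thesis
  proof cases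
    case zero
    then have "W (Suc i) = W (Suc j)" using D(2) by (intro periodic) (metis add_0_right mod_Suc_eq)
    moreover have "polygonal_path_in S (W (Suc i)) (W (Suc i)) 0"
      unfolding polygonal_path_in_def by (intro exI[of _ "\<lambda>_. W (Suc i)"]) auto
    moreover have "0 + 1 \<le> n div 2" using assms(1) by simp
    ultimately show ?thesis by (intro that[of "Suc i" "Suc j" 0]) auto
  next
    case forward
    have "polygonal_path_in S (W (Suc i + 0)) (W (Suc i + (D - 1))) (D - 1)"
      by (rule polygonal_path_in_chain) (simp add: segs)
    moreover have "W (Suc i + (D - 1)) = W j" using forward D(2) by (intro periodic) simp
    ultimately show ?thesis using forward by (intro that[of "Suc i" j "D - 1"]) auto
  next
    case backward
    define m where "m = n - D - 1"
    have "polygonal_path_in S (W (i + n - 0)) (W (i + n - m)) m"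
    proof (rule polygonal_path_in_chain)
      fix k assume "k < m"
      then have "i + n - k = Suc (i + n - Suc k)" unfolding m_def by simp
      then show "closed_segment (W (i + n - k)) (W (i + n - Suc k)) \<subseteq> S"
        using segs[of "i + n - Suc k"] by (simp add: closed_segment_commute)
    qed
    moreover have "W (i + n - 0) = W i" by (intro periodic) simp
    moreover have "W (i + n - m) = W (Suc j)"
    proof (rule periodic)
      have "i + n - m = Suc (i + D)" unfolding m_def using D(1) backward by simp
      then show "(i + n - m) mod n = Suc j mod n" using D(2) by (metis mod_Suc_eq)
    qed
    moreover have "m + 1 \<le> n div 2" unfolding m_def using backward D(1) by linarith
    ultimately show ?thesis using that by auto
  qed
qed

lemma eventually_at_right_0_affine_pos:
  fixes b c :: real
  assumes "0 \<le> c" and "0 < c \<or> 0 < b"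
  shows "\<forall>\<^sub>F s in at_right 0. 0 < c + s * b"
proof (cases "0 < c")
  case True
  have "((\<lambda>s. c + s * b) \<longlongrightarrow> c + 0 * b) (at_right 0)" by (intro tendsto_intros)
  then show ?thesis using True by (auto dest: order_tendstoD(1))
next
  case False
  then show ?thesis using assms eventually_at_right_less[of 0] by (auto elim: eventually_mono)
qed

lemma eventually_at_right_0_norm_scaleR_less:
  fixes v :: "'a::real_normed_vector"
  assumes "0 < d"
  shows "\<forall>\<^sub>F s in at_right 0. norm (s *\<^sub>R v) < d"
proof -
  have "((\<lambda>s. norm (s *\<^sub>R v)) \<longlongrightarrow> norm ((0::real) *\<^sub>R v)) (at_right 0)" by (intro tendsto_intros)
  then show ?thesis using assms by (auto dest: order_tendstoD(2))
qed

lemma convex_comb_pos: "(a::real) > 0 \<Longrightarrow> b > 0 \<Longrightarrow> 0 \<le> u \<Longrightarrow> u \<le> 1 \<Longrightarrow> (1-u)*a + u*b > 0"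
  by (cases "u = 0") (auto intro: add_nonneg_pos add_pos_nonneg)

lemma inner_add_one_pos:
  fixes a b :: "'a::real_inner"
  assumes "a \<bullet> a = 1" "b \<bullet> b = 1" "a + b \<noteq> 0"
  shows "0 < a \<bullet> b + 1"
proof -
  have "(a + b) \<bullet> (a + b) = 2 * (a \<bullet> b + 1)"
    using assms by (simp add: inner_add_left inner_add_right inner_commute)
  moreover have "0 < (a + b) \<bullet> (a + b)" using assms(3) by simp
  ultimately show ?thesis by simp
qed

lemma first_hit_segment:
  fixes a q :: "'a::real_normed_vector"
  assumes "closed S" "q \<in> S" "a \<notin> S"
  obtains h where "h \<in> closed_segment a q" "h \<in> S"
    "\<And>s. 0 < s \<Longrightarrow> s \<le> 1 \<Longrightarrow> closed_segment a (h + s *\<^sub>R (a - h)) \<inter> S = {}"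
proof -
  define f where "f t = a + t *\<^sub>R (q - a)" for t :: real
  define T where "T = {0..1} \<inter> f -` S"
  have "closed (f -` S)"
    using assms(1) unfolding f_def by (intro continuous_closed_vimage) (auto intro!: continuous_intros)
  then have "compact T" unfolding T_def by (intro compact_Int_closed) auto
  moreover have "1 \<in> T" unfolding T_def f_def using assms(2) by simp
  ultimately obtain t0 where t0: "t0 \<in> T" "\<And>t. t \<in> T \<Longrightarrow> t0 \<le> t"
    using compact_attains_inf[of T] by auto
  then have t0_bounds: "0 \<le> t0" "t0 \<le> 1" and "f t0 \<in> S" unfolding T_def by auto
  have below: "f t \<notin> S" if "0 \<le> t" "t < t0" for t
  proof
    assume "f t \<in> S"
    then have "t \<in> T" using that t0_bounds unfolding T_def by auto
    then show False using t0(2) that by fastforce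
  qed
  have "t0 \<noteq> 0" using \<open>f t0 \<in> S\<close> assms(3) unfolding f_def by auto
  then have "0 < t0" using t0_bounds by simp
  show ?thesis
  proof (rule that[of "f t0"])
    show "f t0 \<in> closed_segment a q"
      unfolding f_def in_segment using t0_bounds by (intro exI[of _ t0]) (simp add: algebra_simps)
    show "f t0 \<in> S" by fact
    fix s :: real assume s: "0 < s" "s \<le> 1"
    have "(1 - \<mu>) *\<^sub>R a + \<mu> *\<^sub>R (f t0 + s *\<^sub>R (a - f t0)) \<notin> S" if \<mu>: "0 \<le> \<mu>" "\<mu> \<le> 1" for \<mu>
    proof -
      have "\<mu> * ((1 - s) * t0) \<le> (1 - s) * t0"
        using \<mu> s t0_bounds by (simp add: mult_left_le_one_le)
      moreover have "(1 - s) * t0 < t0" using s \<open>0 < t0\<close> by simp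
      moreover have "0 \<le> \<mu> * ((1 - s) * t0)" using \<mu> s t0_bounds by simp
      ultimately have "f (\<mu> * ((1 - s) * t0)) \<notin> S" by (intro below) linarith+
      moreover have "(1 - \<mu>) *\<^sub>R a + \<mu> *\<^sub>R (f t0 + s *\<^sub>R (a - f t0)) = f (\<mu> * ((1 - s) * t0))"
        unfolding f_def by (simp add: algebra_simps)
      ultimately show ?thesis by simp
    qed
    then show "closed_segment a (f t0 + s *\<^sub>R (a - f t0)) \<inter> S = {}"
      by (fastforce simp: in_segment)
  qed
qed

lemma closed_segment_subset_connected_component:
  fixes y1 y2 :: "'a::real_normed_vector"
  assumes "closed_segment y1 y2 \<subseteq> S"
    and "y1 \<in> connected_component_set S z \<or> y2 \<in> connected_component_set S z"
  shows "closed_segment y1 y2 \<subseteq> connected_component_set S z"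
proof -
  obtain y where y: "y \<in> closed_segment y1 y2" "y \<in> connected_component_set S z"
    using assms(2) by auto
  have "closed_segment y1 y2 \<subseteq> connected_component_set S y"
    using y(1) assms(1) by (intro connected_component_maximal) (auto simp: connected_segment)
  then show ?thesis using connected_component_eq[OF y(2)] by simp
qed

section \<open>Simple polygons separate the plane\<close>

lemma simple_loop_separates_plane:
  fixes g :: "real \<Rightarrow> 'a::euclidean_space"
  assumes "simple_path g" "pathfinish g = pathstart g" "DIM('a) = 2"
  shows "\<not> connected (- path_image g)"
proof -
  have "path_image g homeomorphic sphere (0::complex) 1"
    using assms by (intro homeomorphic_simple_path_image_circle) auto
  also have "sphere (0::complex) 1 homeomorphic sphere (0::'a) 1"
    using assms(3) by (intro homeomorphic_spheres') auto
  finally show ?thesis by (rule Jordan_Brouwer_separation) simp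
qed

fun polygonal_arc :: "(nat \<Rightarrow> 'a::real_normed_vector) \<Rightarrow> nat \<Rightarrow> real \<Rightarrow> 'a" where
  "polygonal_arc p 0 = linepath (p 0) (p 1)"
| "polygonal_arc p (Suc m) = polygonal_arc p m +++ linepath (p (Suc m)) (p (Suc (Suc m)))"

lemma arc_polygonal_arc:
  assumes "Suc m < n" and simple: "simple_closed_polygon n p"
  shows "arc (polygonal_arc p m) \<and> pathstart (polygonal_arc p m) = p 0
     \<and> pathfinish (polygonal_arc p m) = p (Suc m)
     \<and> path_image (polygonal_arc p m) = (\<Union>i\<le>m. closed_segment (p i) (p (Suc i)))"
  using assms(1)
proof (induction m)
  case 0
  have "p 0 \<noteq> p 1" using simple 0 unfolding simple_closed_polygon_def inj_on_def by auto
  then show ?case by auto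
next
  case (Suc m)
  then have IH: "arc (polygonal_arc p m)" "pathfinish (polygonal_arc p m) = p (Suc m)"
     "path_image (polygonal_arc p m) = (\<Union>i\<le>m. closed_segment (p i) (p (Suc i)))"
     "pathstart (polygonal_arc p m) = p 0" by auto
  have "p (Suc m) \<noteq> p (Suc (Suc m))"
    using simple Suc.prems unfolding simple_closed_polygon_def by (auto dest: inj_onD)
  moreover have "path_image (polygonal_arc p m) \<inter> closed_segment (p (Suc m)) (p (Suc (Suc m)))
      \<subseteq> {p (Suc m)}"
  proof -
    have "closed_segment (p i) (p (Suc i)) \<inter> closed_segment (p (Suc m)) (p (Suc (Suc m)))
        \<subseteq> {p (Suc m)}" if i: "i \<le> m" for i
    proof -
      have "poly_edge n p i \<inter> poly_edge n p (Suc m) = (if Suc m = Suc i mod n then {p (Suc m)}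
           else if i = Suc (Suc m) mod n then {p i} else {})"
        using simple Suc.prems i unfolding simple_closed_polygon_def by auto
      moreover have "i \<noteq> Suc (Suc m) mod n" using Suc.prems i by auto
      ultimately show ?thesis using Suc.prems i by (auto simp: poly_edge_def split: if_splits)
    qed
    then show ?thesis using IH(3) by auto
  qed
  ultimately have "arc (polygonal_arc p (Suc m))" using arc_join[OF IH(1) arc_linepath] IH by auto
  then show ?case using IH by (simp add: path_image_join atMost_Suc Un_commute)
qed

lemma polygon_separates_plane:
  assumes "3 \<le> n" and simple: "simple_closed_polygon n p"
  shows "\<not> connected (- polygon n p)"
proof -
  define g where "g = polygonal_arc p (n - 2) +++ linepath (p (n - 1)) (p 0)"
  have n2: "Suc (n - 2) = n - 1" "Suc (n - 2) < n" using assms by auto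
  note arc = arc_polygonal_arc[OF n2(2) simple]
  have "p (n - 1) \<noteq> p 0"
    using simple assms(1) unfolding simple_closed_polygon_def by (fastforce dest: inj_onD)
  have last: "poly_edge n p (n - 1) = closed_segment (p (n - 1)) (p 0)"
    using assms by (simp add: poly_edge_def)
  have first: "poly_edge n p i = closed_segment (p i) (p (Suc i))" if "i \<le> n - 2" for i
    using assms that by (simp add: poly_edge_def)
  have "closed_segment (p i) (p (Suc i)) \<inter> closed_segment (p (n - 1)) (p 0) \<subseteq> {p 0, p (n - 1)}"
    if i: "i \<le> n - 2" for i
  proof -
    have "poly_edge n p i \<inter> poly_edge n p (n - 1) = (if n - 1 = Suc i mod n then {p (n - 1)}
         else if i = Suc (n - 1) mod n then {p i} else {})"
      using assms i unfolding simple_closed_polygon_def by auto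
    moreover have "Suc (n - 1) mod n = 0" using assms by auto
    ultimately show ?thesis using first[OF i] last by (auto split: if_splits)
  qed
  then have "simple_path g" unfolding g_def using arc n2 \<open>p (n - 1) \<noteq> p 0\<close>
    by (intro simple_path_join_loop) auto
  moreover have "pathfinish g = pathstart g" unfolding g_def using arc by auto
  moreover have "path_image g = polygon n p"
  proof -
    have "{..<n} = insert (n - 1) {..n - 2}" using assms by auto
    then show ?thesis unfolding g_def polygon_def using arc n2 first last
      by (simp add: path_image_join Un_commute)
  qed
  ultimately show ?thesis using simple_loop_separates_plane[of g] by auto
qed

definition rot90 :: "real^2 \<Rightarrow> real^2" where "rot90 x = vector [- x$2, x$1]"

lemma inner_vec2: "(x::real^2) \<bullet> y = x$1 * y$1 + x$2 * y$2"
  by (simp add: inner_vec_def sum_2)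

lemma rot90_nth [simp]: "rot90 x $ 1 = - x$2" "rot90 x $ 2 = x$1"
  by (simp_all add: rot90_def)

lemma rot90_orthogonal [simp]: "rot90 x \<bullet> x = 0" "x \<bullet> rot90 x = 0"
  by (simp_all add: inner_vec2)

lemma inner_rot90_left: "rot90 x \<bullet> y = - (x \<bullet> rot90 y)"
  by (simp add: inner_vec2)

lemma rot90_scaleR: "rot90 (c *\<^sub>R x) = c *\<^sub>R rot90 x"
  by (simp add: vec_eq_iff forall_2)

lemma norm_rot90 [simp]: "norm (rot90 x) = norm x"
  by (simp add: norm_eq_sqrt_inner inner_vec2 algebra_simps)

lemma rot90_eq_0_iff [simp]: "rot90 x = 0 \<longleftrightarrow> x = 0"
  by (metis norm_eq_zero norm_rot90)

lemma rot90_inject: "rot90 x = rot90 y \<longleftrightarrow> x = y"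
  by (auto simp: vec_eq_iff forall_2)

lemma orthogonal_rot90_imp_parallel:
  assumes "x \<noteq> 0" "y \<bullet> rot90 x = 0"
  shows "y = ((y \<bullet> x) / (x \<bullet> x)) *\<^sub>R x"
proof -
  have xx: "x$1 * x$1 + x$2 * x$2 \<noteq> 0" using assms(1)
    by (metis inner_vec2 inner_eq_zero_iff)
  have h: "x$1 * y$2 = x$2 * y$1" using assms(2) by (simp add: inner_vec2 algebra_simps)
  have "y$1 * (x$1 * x$1 + x$2 * x$2) = (y$1 * x$1 + y$2 * x$2) * x$1"
    "y$2 * (x$1 * x$1 + x$2 * x$2) = (y$1 * x$1 + y$2 * x$2) * x$2"
    using h by (simp_all add: algebra_simps)
  then show ?thesis using xx
    by (simp add: vec_eq_iff forall_2 inner_vec2 field_simps)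
qed

locale simple_polygon =
  fixes n :: nat and p :: "nat \<Rightarrow> real^2"
  assumes three_le_n: "3 \<le> n" and simple: "simple_closed_polygon n p"
begin

abbreviation P where "P \<equiv> polygon n p"

definition vert where "vert i = p (i mod n)"
definition edge where "edge i = closed_segment (vert i) (vert (Suc i))"
definition dir where "dir i = vert (Suc i) - vert i"
definition normal where "normal i = rot90 (dir i)"

lemma n_pos: "0 < n"
  using three_le_n by simp

lemma vert_mod: "i mod n = j mod n \<Longrightarrow> vert i = vert j"
  by (simp add: vert_def)

lemma vert_eq_iff: "vert i = vert j \<longleftrightarrow> i mod n = j mod n"
proof -
  have "inj_on p {..<n}" using simple unfolding simple_closed_polygon_def by auto
  then show ?thesis unfolding vert_def using n_pos
    by (metis inj_on_contraD lessThan_iff mod_less_divisor)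
qed

lemma edge_mod: "i mod n = j mod n \<Longrightarrow> edge i = edge j"
  unfolding edge_def by (metis vert_mod mod_Suc_eq)

lemma dir_mod: "i mod n = j mod n \<Longrightarrow> dir i = dir j"
  unfolding dir_def by (metis vert_mod mod_Suc_eq)

lemma normal_mod: "i mod n = j mod n \<Longrightarrow> normal i = normal j"
  unfolding normal_def by (metis dir_mod)

lemma edge_eq_poly_edge: "edge i = poly_edge n p (i mod n)"
  unfolding edge_def poly_edge_def vert_def by (simp add: mod_Suc_eq)

lemma polygon_eq_Union_edge: "P = (\<Union>i. edge i)"
proof -
  have "P = (\<Union>i<n. edge i)" unfolding polygon_def
    by (metis (no_types, lifting) edge_eq_poly_edge SUP_cong lessThan_iff mod_less)
  also have "\<dots> = (\<Union>i. edge i)"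
  proof (intro subset_antisym subsetI)
    fix x assume "x \<in> (\<Union>i. edge i)"
    then obtain i where "x \<in> edge i" by blast
    then have "x \<in> edge (i mod n)" using edge_mod[of i "i mod n"] by simp
    then show "x \<in> (\<Union>i<n. edge i)" using n_pos by auto
  qed auto
  finally show ?thesis .
qed

lemma edge_subset_polygon: "edge i \<subseteq> P"
  unfolding polygon_eq_Union_edge by blast

lemma vert_in_polygon: "vert i \<in> P"
  using edge_subset_polygon unfolding edge_def by blast

lemma compact_polygon: "compact P"
  unfolding polygon_def poly_edge_def by (intro compact_UN) (auto simp: compact_segment)

lemma edge_Int: "i mod n \<noteq> j mod n \<Longrightarrow> edge i \<inter> edge j = (if j mod n = Suc i mod n then {vert j}
   else if i mod n = Suc j mod n then {vert i} else {})"
proof -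
  assume ij: "i mod n \<noteq> j mod n"
  have "poly_edge n p (i mod n) \<inter> poly_edge n p (j mod n) =
         (if j mod n = Suc (i mod n) mod n then {p (j mod n)}
          else if i mod n = Suc (j mod n) mod n then {p (i mod n)} else {})"
    using simple ij n_pos unfolding simple_closed_polygon_def by auto
  then show ?thesis by (simp add: edge_eq_poly_edge vert_def mod_Suc_eq)
qed

lemma mod_Suc_neq: "i mod n \<noteq> Suc i mod n"
  using three_le_n by (auto simp: mod_Suc split: if_splits)

lemma edge_Int_Suc: "edge i \<inter> edge (Suc i) = {vert (Suc i)}"
  using edge_Int mod_Suc_neq by auto

lemma dir_nonzero: "dir i \<noteq> 0"
  using mod_Suc_neq[of i] unfolding dir_def by (auto simp: vert_eq_iff)

lemma normal_nonzero: "normal i \<noteq> 0"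
  by (simp add: normal_def dir_nonzero)

lemma mem_edge_iff: "x \<in> edge i \<longleftrightarrow> (\<exists>u. 0 \<le> u \<and> u \<le> 1 \<and> x = vert i + u *\<^sub>R dir i)"
  unfolding edge_def dir_def in_segment by (auto simp: algebra_simps)

text \<open>Index \<open>k + n - 1\<close> is the predecessor of \<open>k\<close> modulo \<open>n\<close>, written so as to avoid truncated
subtraction at \<open>k = 0\<close>.\<close>

lemma Suc_pred_eq: "Suc (k + n - 1) = k + n"
  using n_pos by simp

lemma dir_Suc_pred: "dir (Suc (k + n - 1)) = dir k"
  unfolding Suc_pred_eq by (rule dir_mod) simp

lemma vert_pred: "vert (k + n - 1) = vert k - dir (k + n - 1)"
proof -
  have "vert (Suc (k + n - 1)) = vert k" unfolding Suc_pred_eq by (rule vert_mod) simp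
  then have "dir (k + n - 1) = vert k - vert (k + n - 1)" unfolding dir_def by (rule arg_cong)
  then show ?thesis by simp
qed

lemma pred_mod_eq: "(k mod n + n - 1) mod n = (k + n - 1) mod n"
proof -
  have "k mod n + n - 1 = k mod n + (n - 1)" "k + n - 1 = k + (n - 1)" using n_pos by auto
  then show ?thesis by (simp add: mod_add_left_eq)
qed

lemma pred_mod_if_Suc_mod: "k mod n = Suc j mod n \<Longrightarrow> j mod n = (k + n - 1) mod n"
proof -
  assume h: "k mod n = Suc j mod n"
  have "k + n - 1 = k + (n - 1)" using n_pos by simp
  then have "(k + n - 1) mod n = (k mod n + (n - 1)) mod n" by (simp add: mod_add_left_eq)
  also have "\<dots> = (Suc j + (n - 1)) mod n" using h by (simp add: mod_add_left_eq)
  also have "Suc j + (n - 1) = j + n" using n_pos by simp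
  finally show ?thesis by simp
qed

lemma no_reversal: "\<not> (\<exists>c>0. dir (Suc i) = (- c) *\<^sub>R dir i)"
proof
  assume "\<exists>c>0. dir (Suc i) = (- c) *\<^sub>R dir i"
  then obtain c where c: "c > 0" "dir (Suc i) = (- c) *\<^sub>R dir i" by auto
  show False
  proof (cases "c \<le> 1")
    case True
    have "vert (Suc (Suc i)) = vert i + (1 - c) *\<^sub>R dir i"
      using c by (simp add: dir_def algebra_simps)
    then have "vert (Suc (Suc i)) \<in> edge i" unfolding mem_edge_iff using True c by (intro exI[of _ "1 - c"]) auto
    moreover have "vert (Suc (Suc i)) \<in> edge (Suc i)" by (simp add: edge_def)
    ultimately have "vert (Suc (Suc i)) = vert (Suc i)" using edge_Int_Suc by blast
    then show False using dir_nonzero[of "Suc i"] by (simp add: dir_def)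
  next
    case False
    have "vert i = vert (Suc i) + (1 / c) *\<^sub>R dir (Suc i)" using c by (simp add: dir_def)
    then have "vert i \<in> edge (Suc i)" unfolding mem_edge_iff using False c by (intro exI[of _ "1 / c"]) auto
    moreover have "vert i \<in> edge i" by (simp add: edge_def)
    ultimately have "vert i = vert (Suc i)" using edge_Int_Suc by blast
    then show False using dir_nonzero[of i] by (simp add: dir_def)
  qed
qed

section \<open>Points beside an edge\<close>

lemma sep_exists:
  "\<exists>\<delta>>0. \<forall>i j x y. edge i \<inter> edge j = {} \<longrightarrow> x \<in> edge i \<longrightarrow> y \<in> edge j \<longrightarrow> \<delta> \<le> dist x y"
proof -
  define F where "F = {(i, j). i < n \<and> j < n \<and> edge i \<inter> edge j = {}}"
  have "F \<subseteq> {..<n} \<times> {..<n}" unfolding F_def by auto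
  then have "finite F" by (rule finite_subset) simp
  define S where "S = insert 1 ((\<lambda>(i, j). setdist (edge i) (edge j)) ` F)"
  have fS: "finite S" unfolding S_def using \<open>finite F\<close> by simp
  have "s > 0" if "s \<in> S" for s
  proof -
    have "setdist (edge i) (edge j) > 0" if "(i, j) \<in> F" for i j
      using that unfolding F_def edge_def
      by (subst setdist_gt_0_compact_closed) (auto simp: compact_segment closed_segment)
    then show ?thesis using \<open>s \<in> S\<close> unfolding S_def by auto
  qed
  then have "Min S > 0" using fS by (auto simp: S_def)
  moreover have "Min S \<le> dist x y"
    if h: "edge i \<inter> edge j = {}" "x \<in> edge i" "y \<in> edge j" for i j x y
  proof -
    have e: "edge i = edge (i mod n)" "edge j = edge (j mod n)"
      using edge_mod[of i "i mod n"] edge_mod[of j "j mod n"] by simp_all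
    then have "(i mod n, j mod n) \<in> F" unfolding F_def using h(1) n_pos by simp
    then have "setdist (edge (i mod n)) (edge (j mod n)) \<in> S" unfolding S_def by force
    then have "Min S \<le> setdist (edge (i mod n)) (edge (j mod n))" using fS by simp
    also have "\<dots> \<le> dist x y" using h(2,3) e by (simp add: setdist_le_dist)
    finally show ?thesis .
  qed
  ultimately show ?thesis by blast
qed

definition sep where
  "sep = (SOME \<delta>. \<delta> > 0 \<and> (\<forall>i j x y. edge i \<inter> edge j = {} \<longrightarrow> x \<in> edge i \<longrightarrow> y \<in> edge j \<longrightarrow> \<delta> \<le> dist x y))"

lemma sep_pos: "0 < sep"
  and sep_le_dist: "edge i \<inter> edge j = {} \<Longrightarrow> x \<in> edge i \<Longrightarrow> y \<in> edge j \<Longrightarrow> sep \<le> dist x y"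
  using someI_ex[OF sep_exists] unfolding sep_def by blast+

text \<open>The sign \<open>\<sigma> = \<plusminus>1\<close> selects one of the two sides of the polygon.\<close>

definition side_normal :: "real \<Rightarrow> nat \<Rightarrow> real^2" where "side_normal \<sigma> k = \<sigma> *\<^sub>R normal k"

lemma dir_inner_side_normal [simp]: "dir k \<bullet> side_normal \<sigma> k = 0"
  by (simp add: side_normal_def normal_def)

lemma dir_inner_side_normal_commute: "dir i \<bullet> side_normal \<sigma> j = - (dir j \<bullet> side_normal \<sigma> i)"
  unfolding side_normal_def normal_def using inner_rot90_left[of "dir j" "dir i"]
  by (simp add: inner_commute)

lemma side_normal_mod: "i mod n = j mod n \<Longrightarrow> side_normal \<sigma> i = side_normal \<sigma> j"
  unfolding side_normal_def using normal_mod by metis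

text \<open>\<open>beside \<sigma> k \<gamma> e\<close>: the point \<open>vert k + \<gamma> *\<^sub>R dir k + e\<close> is within \<open>sep\<close> of edge \<open>k\<close>, strictly on
side \<open>\<sigma>\<close> of its line, and also strictly on side \<open>\<sigma>\<close> of the line of each neighbouring edge
that turns towards side \<open>\<sigma>\<close>. The last two conditions are affine in \<open>(\<gamma>, e)\<close>, so such points
form a convex set.\<close>

definition beside :: "real \<Rightarrow> nat \<Rightarrow> real \<Rightarrow> real^2 \<Rightarrow> bool" where
  "beside \<sigma> k \<gamma> e \<longleftrightarrow> 0 \<le> \<gamma> \<and> \<gamma> \<le> 1 \<and> 0 < e \<bullet> side_normal \<sigma> k \<and> norm e < sep \<and>
     (0 < dir (Suc k) \<bullet> side_normal \<sigma> k \<longrightarrow>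
        0 < (\<gamma> - 1) * (dir k \<bullet> side_normal \<sigma> (Suc k)) + e \<bullet> side_normal \<sigma> (Suc k)) \<and>
     (dir (k + n - 1) \<bullet> side_normal \<sigma> k < 0 \<longrightarrow>
        0 < \<gamma> * (dir k \<bullet> side_normal \<sigma> (k + n - 1)) + e \<bullet> side_normal \<sigma> (k + n - 1))"

lemma beside_not_in_edge:
  assumes "beside \<sigma> k \<gamma> e"
  shows "vert k + \<gamma> *\<^sub>R dir k + e \<notin> edge k"
proof
  assume "vert k + \<gamma> *\<^sub>R dir k + e \<in> edge k"
  then obtain u where "vert k + \<gamma> *\<^sub>R dir k + e = vert k + u *\<^sub>R dir k" by (auto simp: mem_edge_iff)
  then have "e = (u - \<gamma>) *\<^sub>R dir k" by (simp add: algebra_simps)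
  then show False using assms unfolding beside_def by simp
qed

lemma beside_not_in_next_edge:
  assumes "beside \<sigma> k \<gamma> e"
  shows "vert k + \<gamma> *\<^sub>R dir k + e \<notin> edge (Suc k)"
proof
  assume "vert k + \<gamma> *\<^sub>R dir k + e \<in> edge (Suc k)"
  then obtain u where u: "0 \<le> u" "vert k + \<gamma> *\<^sub>R dir k + e = vert (Suc k) + u *\<^sub>R dir (Suc k)"
    by (auto simp: mem_edge_iff)
  then have e: "e = (1 - \<gamma>) *\<^sub>R dir k + u *\<^sub>R dir (Suc k)"
    by (simp add: dir_def algebra_simps)
  show False
  proof (cases "0 < dir (Suc k) \<bullet> side_normal \<sigma> k")
    case True
    have "e \<bullet> side_normal \<sigma> (Suc k) = (1 - \<gamma>) * (dir k \<bullet> side_normal \<sigma> (Suc k))"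
      unfolding e by (simp add: inner_add_left)
    then show False using assms True unfolding beside_def by (simp add: algebra_simps)
  next
    case False
    have "e \<bullet> side_normal \<sigma> k = u * (dir (Suc k) \<bullet> side_normal \<sigma> k)"
      unfolding e by (simp add: inner_add_left)
    also have "\<dots> \<le> 0" using False u(1) by (simp add: mult_nonneg_nonpos)
    finally show False using assms unfolding beside_def by simp
  qed
qed

lemma beside_not_in_prev_edge:
  assumes "beside \<sigma> k \<gamma> e"
  shows "vert k + \<gamma> *\<^sub>R dir k + e \<notin> edge (k + n - 1)"
proof
  assume "vert k + \<gamma> *\<^sub>R dir k + e \<in> edge (k + n - 1)"
  then obtain u where u: "u \<le> 1" "vert k + \<gamma> *\<^sub>R dir k + e = vert (k + n - 1) + u *\<^sub>R dir (k + n - 1)"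
    by (auto simp: mem_edge_iff)
  then have e: "e = (u - 1) *\<^sub>R dir (k + n - 1) - \<gamma> *\<^sub>R dir k"
    unfolding vert_pred by (simp add: algebra_simps)
  show False
  proof (cases "dir (k + n - 1) \<bullet> side_normal \<sigma> k < 0")
    case True
    have "\<gamma> * (dir k \<bullet> side_normal \<sigma> (k + n - 1)) + e \<bullet> side_normal \<sigma> (k + n - 1) = 0"
      unfolding e by (simp add: inner_diff_left)
    then show False using assms True unfolding beside_def by simp
  next
    case False
    have "e \<bullet> side_normal \<sigma> k = (u - 1) * (dir (k + n - 1) \<bullet> side_normal \<sigma> k)"
      unfolding e by (simp add: inner_diff_left)
    also have "\<dots> \<le> 0" using False u(1) by (simp add: mult_nonpos_nonneg)
    finally show False using assms unfolding beside_def by simp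
  qed
qed

lemma beside_not_in_far_edge:
  assumes "beside \<sigma> k \<gamma> e"
    and "j mod n \<noteq> k mod n" "j mod n \<noteq> Suc k mod n" "j mod n \<noteq> (k + n - 1) mod n"
  shows "vert k + \<gamma> *\<^sub>R dir k + e \<notin> edge j"
proof
  assume X: "vert k + \<gamma> *\<^sub>R dir k + e \<in> edge j"
  have "k mod n \<noteq> Suc j mod n" using assms(4) pred_mod_if_Suc_mod by metis
  then have "edge k \<inter> edge j = {}" using edge_Int assms(2,3) by auto
  moreover have "vert k + \<gamma> *\<^sub>R dir k \<in> edge k"
    using assms(1) unfolding beside_def mem_edge_iff by auto
  ultimately have "sep \<le> dist (vert k + \<gamma> *\<^sub>R dir k) (vert k + \<gamma> *\<^sub>R dir k + e)"
    using sep_le_dist X by blast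
  then show False using assms(1) unfolding beside_def by (simp add: dist_norm)
qed

lemma beside_not_in_polygon:
  assumes "beside \<sigma> k \<gamma> e"
  shows "vert k + \<gamma> *\<^sub>R dir k + e \<notin> P"
proof
  assume "vert k + \<gamma> *\<^sub>R dir k + e \<in> P"
  then obtain j where j: "vert k + \<gamma> *\<^sub>R dir k + e \<in> edge j" unfolding polygon_eq_Union_edge by auto
  consider "j mod n = k mod n" | "j mod n = Suc k mod n" | "j mod n = (k + n - 1) mod n"
    | "j mod n \<noteq> k mod n" "j mod n \<noteq> Suc k mod n" "j mod n \<noteq> (k + n - 1) mod n" by blast
  then show False
  proof cases
    case 1
    then show False using j edge_mod beside_not_in_edge[OF assms] by metis
  next
    case 2
    then show False using j edge_mod beside_not_in_next_edge[OF assms] by metis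
  next
    case 3
    then show False using j edge_mod beside_not_in_prev_edge[OF assms] by metis
  next
    case 4
    then show False using j beside_not_in_far_edge[OF assms] by blast
  qed
qed

lemma beside_convex:
  assumes b0: "beside \<sigma> k \<gamma>0 e0" and b1: "beside \<sigma> k \<gamma>1 e1" and u: "0 \<le> u" "u \<le> 1"
  shows "beside \<sigma> k ((1 - u) * \<gamma>0 + u * \<gamma>1) ((1 - u) *\<^sub>R e0 + u *\<^sub>R e1)"
proof -
  let ?\<gamma> = "(1 - u) * \<gamma>0 + u * \<gamma>1" and ?e = "(1 - u) *\<^sub>R e0 + u *\<^sub>R e1"
  have cv: "\<And>a b. 0 < a \<Longrightarrow> 0 < b \<Longrightarrow> 0 < (1 - u) * a + u * b" using convex_comb_pos u by auto
  have affine1: "(?\<gamma> - 1) * x + ?e \<bullet> m = (1 - u) * ((\<gamma>0 - 1) * x + e0 \<bullet> m) + u * ((\<gamma>1 - 1) * x + e1 \<bullet> m)"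
    and affine0: "?\<gamma> * x + ?e \<bullet> m = (1 - u) * (\<gamma>0 * x + e0 \<bullet> m) + u * (\<gamma>1 * x + e1 \<bullet> m)"
    and linear: "?e \<bullet> m = (1 - u) * (e0 \<bullet> m) + u * (e1 \<bullet> m)" for x m
    by (simp_all add: inner_add_left algebra_simps)
  have "norm ?e \<le> (1 - u) * norm e0 + u * norm e1"
    using u by (metis abs_of_nonneg diff_ge_0_iff_ge norm_scaleR norm_triangle_ineq)
  also have "\<dots> < sep"
  proof -
    have "0 < (1 - u) * (sep - norm e0) + u * (sep - norm e1)"
      using b0 b1 unfolding beside_def by (intro cv) auto
    then show ?thesis by (simp add: algebra_simps)
  qed
  finally have "norm ?e < sep" .
  moreover have "0 \<le> ?\<gamma>" "?\<gamma> \<le> 1"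
    using b0 b1 u unfolding beside_def by (auto intro!: convex_bound_le)
  moreover have "0 < ?e \<bullet> side_normal \<sigma> k"
    unfolding linear using b0 b1 unfolding beside_def by (intro cv) auto
  moreover have "0 < (?\<gamma> - 1) * (dir k \<bullet> side_normal \<sigma> (Suc k)) + ?e \<bullet> side_normal \<sigma> (Suc k)"
    if "0 < dir (Suc k) \<bullet> side_normal \<sigma> k"
    unfolding affine1 using b0 b1 that unfolding beside_def by (intro cv) auto
  moreover have "0 < ?\<gamma> * (dir k \<bullet> side_normal \<sigma> (k + n - 1)) + ?e \<bullet> side_normal \<sigma> (k + n - 1)"
    if "dir (k + n - 1) \<bullet> side_normal \<sigma> k < 0"
    unfolding affine0 using b0 b1 that unfolding beside_def by (intro cv) auto
  ultimately show ?thesis unfolding beside_def by blast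
qed

lemma beside_segment_disjoint:
  assumes "beside \<sigma> k \<gamma>0 e0" "beside \<sigma> k \<gamma>1 e1"
  shows "closed_segment (vert k + \<gamma>0 *\<^sub>R dir k + e0) (vert k + \<gamma>1 *\<^sub>R dir k + e1) \<inter> P = {}"
proof -
  have "(1 - u) *\<^sub>R (vert k + \<gamma>0 *\<^sub>R dir k + e0) + u *\<^sub>R (vert k + \<gamma>1 *\<^sub>R dir k + e1) \<notin> P"
    if u: "0 \<le> u" "u \<le> 1" for u
  proof -
    have "(1 - u) *\<^sub>R (vert k + \<gamma>0 *\<^sub>R dir k + e0) + u *\<^sub>R (vert k + \<gamma>1 *\<^sub>R dir k + e1)
        = vert k + ((1 - u) * \<gamma>0 + u * \<gamma>1) *\<^sub>R dir k + ((1 - u) *\<^sub>R e0 + u *\<^sub>R e1)"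
      by (simp add: algebra_simps)
    then show ?thesis using beside_not_in_polygon[OF beside_convex[OF assms u]] by simp
  qed
  then show ?thesis unfolding closed_segment_def by blast
qed

lemma eventually_beside:
  assumes "0 \<le> \<gamma>" "\<gamma> \<le> 1" "0 < v \<bullet> side_normal \<sigma> k"
    and "\<gamma> = 1 \<Longrightarrow> 0 < v \<bullet> side_normal \<sigma> (Suc k)"
    and "\<gamma> = 0 \<Longrightarrow> 0 < v \<bullet> side_normal \<sigma> (k + n - 1)"
  shows "\<forall>\<^sub>F s in at_right 0. beside \<sigma> k \<gamma> (s *\<^sub>R v)"
proof -
  have nxt: "\<forall>\<^sub>F s in at_right 0. 0 < dir (Suc k) \<bullet> side_normal \<sigma> k \<longrightarrow>
      0 < (\<gamma> - 1) * (dir k \<bullet> side_normal \<sigma> (Suc k)) + (s *\<^sub>R v) \<bullet> side_normal \<sigma> (Suc k)"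
  proof (cases "0 < dir (Suc k) \<bullet> side_normal \<sigma> k")
    case True
    have "(\<gamma> - 1) * (dir k \<bullet> side_normal \<sigma> (Suc k)) = (1 - \<gamma>) * (dir (Suc k) \<bullet> side_normal \<sigma> k)"
      using dir_inner_side_normal_commute[of k \<sigma> "Suc k"] by (simp add: algebra_simps)
    moreover have "0 < (1 - \<gamma>) * (dir (Suc k) \<bullet> side_normal \<sigma> k) \<or> 0 < v \<bullet> side_normal \<sigma> (Suc k)"
      using assms True by (cases "\<gamma> = 1") auto
    then have "\<forall>\<^sub>F s in at_right 0.
        0 < (1 - \<gamma>) * (dir (Suc k) \<bullet> side_normal \<sigma> k) + s * (v \<bullet> side_normal \<sigma> (Suc k))"
      using assms True by (intro eventually_at_right_0_affine_pos) auto
    ultimately show ?thesis by simp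
  qed simp
  have prv: "\<forall>\<^sub>F s in at_right 0. dir (k + n - 1) \<bullet> side_normal \<sigma> k < 0 \<longrightarrow>
      0 < \<gamma> * (dir k \<bullet> side_normal \<sigma> (k + n - 1)) + (s *\<^sub>R v) \<bullet> side_normal \<sigma> (k + n - 1)"
  proof (cases "dir (k + n - 1) \<bullet> side_normal \<sigma> k < 0")
    case True
    have "\<gamma> * (dir k \<bullet> side_normal \<sigma> (k + n - 1)) = \<gamma> * - (dir (k + n - 1) \<bullet> side_normal \<sigma> k)"
      using dir_inner_side_normal_commute[of k \<sigma> "k + n - 1"] by simp
    moreover have "0 < \<gamma> * - (dir (k + n - 1) \<bullet> side_normal \<sigma> k) \<or> 0 < v \<bullet> side_normal \<sigma> (k + n - 1)"
      using assms True by (cases "\<gamma> = 0") (auto simp: mult_pos_neg)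
    then have "\<forall>\<^sub>F s in at_right 0.
        0 < \<gamma> * - (dir (k + n - 1) \<bullet> side_normal \<sigma> k) + s * (v \<bullet> side_normal \<sigma> (k + n - 1))"
      using assms True by (intro eventually_at_right_0_affine_pos) (auto simp: mult_nonneg_nonpos)
    ultimately show ?thesis by simp
  qed simp
  show ?thesis
    using nxt prv eventually_at_right_less[of 0] eventually_at_right_0_norm_scaleR_less[OF sep_pos, of v]
  proof eventually_elim
    case (elim s)
    then show ?case using assms unfolding beside_def by simp
  qed
qed

section \<open>Offset chains\<close>

definition unit_normal :: "real \<Rightarrow> nat \<Rightarrow> real^2" where
  "unit_normal \<sigma> k = (1 / norm (normal k)) *\<^sub>R side_normal \<sigma> k"

lemma side_normal_eq_scaleR_unit_normal: "side_normal \<sigma> k = norm (normal k) *\<^sub>R unit_normal \<sigma> k"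
  unfolding unit_normal_def using normal_nonzero[of k] by simp

lemma inner_unit_normal_self:
  assumes "\<sigma> = 1 \<or> \<sigma> = -1"
  shows "unit_normal \<sigma> k \<bullet> unit_normal \<sigma> k = 1"
proof -
  have "norm (unit_normal \<sigma> k) = 1"
    using assms normal_nonzero[of k] unfolding unit_normal_def side_normal_def by auto
  then show ?thesis by (simp add: dot_square_norm)
qed

lemma unit_normal_pred_add_nonzero:
  assumes "\<sigma> = 1 \<or> \<sigma> = -1"
  shows "unit_normal \<sigma> (k + n - 1) + unit_normal \<sigma> k \<noteq> 0"
proof
  assume "unit_normal \<sigma> (k + n - 1) + unit_normal \<sigma> k = 0"
  then have opp: "unit_normal \<sigma> (k + n - 1) = - unit_normal \<sigma> k" by (simp add: eq_neg_iff_add_eq_0)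
  define c where "c = norm (normal (k + n - 1)) / norm (normal k)"
  have "0 < c" unfolding c_def using normal_nonzero by simp
  have "side_normal \<sigma> (k + n - 1) = - (norm (normal (k + n - 1)) *\<^sub>R unit_normal \<sigma> k)"
    using side_normal_eq_scaleR_unit_normal[of \<sigma> "k + n - 1"] opp by simp
  also have "\<dots> = (- c) *\<^sub>R side_normal \<sigma> k"
    unfolding c_def side_normal_eq_scaleR_unit_normal[of \<sigma> k] using normal_nonzero[of k] by simp
  finally have "\<sigma> *\<^sub>R normal (k + n - 1) = \<sigma> *\<^sub>R (- c *\<^sub>R normal k)"
    unfolding side_normal_def by simp
  moreover have "\<sigma> \<noteq> 0" using assms by auto
  ultimately have "normal (k + n - 1) = - c *\<^sub>R normal k" by (metis scaleR_cancel_left)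
  then have "dir (k + n - 1) = (- c) *\<^sub>R dir k"
    unfolding normal_def by (metis rot90_inject rot90_scaleR)
  then have "dir (Suc (k + n - 1)) = (- (1 / c)) *\<^sub>R dir (k + n - 1)"
    using \<open>0 < c\<close> dir_Suc_pred by simp
  then show False using no_reversal \<open>0 < c\<close> by (meson divide_pos_pos zero_less_one)
qed

definition bisector :: "real \<Rightarrow> nat \<Rightarrow> real^2" where
  "bisector \<sigma> k = unit_normal \<sigma> (k + n - 1) + unit_normal \<sigma> k"

lemma bisector_inner_pos:
  assumes s: "\<sigma> = 1 \<or> \<sigma> = -1"
  shows "0 < bisector \<sigma> k \<bullet> side_normal \<sigma> k" "0 < bisector \<sigma> k \<bullet> side_normal \<sigma> (k + n - 1)"
proof -
  have pos: "0 < unit_normal \<sigma> (k + n - 1) \<bullet> unit_normal \<sigma> k + 1"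
    using inner_add_one_pos inner_unit_normal_self unit_normal_pred_add_nonzero s by blast
  have "bisector \<sigma> k \<bullet> side_normal \<sigma> k = norm (normal k) * (unit_normal \<sigma> (k + n - 1) \<bullet> unit_normal \<sigma> k + 1)"
    unfolding bisector_def side_normal_eq_scaleR_unit_normal[of \<sigma> k]
    using inner_unit_normal_self[OF s, of k] by (simp add: inner_add_left algebra_simps)
  then show "0 < bisector \<sigma> k \<bullet> side_normal \<sigma> k" using pos normal_nonzero[of k] by simp
  have "bisector \<sigma> k \<bullet> side_normal \<sigma> (k + n - 1)
      = norm (normal (k + n - 1)) * (unit_normal \<sigma> (k + n - 1) \<bullet> unit_normal \<sigma> k + 1)"
    unfolding bisector_def side_normal_eq_scaleR_unit_normal[of \<sigma> "k + n - 1"]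
    using inner_unit_normal_self[OF s, of "k + n - 1"] by (simp add: inner_add_left algebra_simps inner_commute)
  then show "0 < bisector \<sigma> k \<bullet> side_normal \<sigma> (k + n - 1)" using pos normal_nonzero[of "k + n - 1"] by simp
qed

lemma bisector_Suc_inner_pos:
  assumes "\<sigma> = 1 \<or> \<sigma> = -1"
  shows "0 < bisector \<sigma> (Suc k) \<bullet> side_normal \<sigma> k"
proof -
  have "(Suc k + n - 1) mod n = k mod n" using n_pos by simp
  then show ?thesis using bisector_inner_pos(2)[OF assms, of "Suc k"] side_normal_mod by metis
qed

lemma bisector_mod: "i mod n = j mod n \<Longrightarrow> bisector \<sigma> i = bisector \<sigma> j"
proof -
  assume h: "i mod n = j mod n"
  then have "(i + n - 1) mod n = (j + n - 1) mod n" using pred_mod_eq by metis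
  then show ?thesis using h unfolding bisector_def unit_normal_def
    by (metis normal_mod side_normal_mod)
qed

lemma beside_mod: "beside \<sigma> (k mod n) \<gamma> e = beside \<sigma> k \<gamma> e"
proof -
  have m: "k mod n mod n = k mod n" "Suc (k mod n) mod n = Suc k mod n"
    "(k mod n + n - 1) mod n = (k + n - 1) mod n"
    using mod_Suc_eq pred_mod_eq by auto
  show ?thesis unfolding beside_def
    using dir_mod[OF m(1)] dir_mod[OF m(2)] dir_mod[OF m(3)]
      side_normal_mod[OF m(1)] side_normal_mod[OF m(2)] side_normal_mod[OF m(3)] by simp
qed

definition offset_clear :: "real \<Rightarrow> real \<Rightarrow> bool" where
  "offset_clear \<sigma> \<epsilon> \<longleftrightarrow>
     (\<forall>k. beside \<sigma> k 0 (\<epsilon> *\<^sub>R bisector \<sigma> k) \<and> beside \<sigma> k 1 (\<epsilon> *\<^sub>R bisector \<sigma> (Suc k)))"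

lemma eventually_offset_clear:
  assumes s: "\<sigma> = 1 \<or> \<sigma> = -1"
  shows "\<forall>\<^sub>F \<epsilon> in at_right 0. offset_clear \<sigma> \<epsilon>"
proof -
  have "\<forall>\<^sub>F \<epsilon> in at_right 0. beside \<sigma> k 0 (\<epsilon> *\<^sub>R bisector \<sigma> k) \<and> beside \<sigma> k 1 (\<epsilon> *\<^sub>R bisector \<sigma> (Suc k))"
    for k using bisector_inner_pos[OF s] bisector_Suc_inner_pos[OF s]
    by (intro eventually_conj eventually_beside) auto
  then have "\<forall>\<^sub>F \<epsilon> in at_right 0. \<forall>k\<in>{..<n}.
      beside \<sigma> k 0 (\<epsilon> *\<^sub>R bisector \<sigma> k) \<and> beside \<sigma> k 1 (\<epsilon> *\<^sub>R bisector \<sigma> (Suc k))"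
    by (intro eventually_ball_finite) auto
  then show ?thesis
  proof eventually_elim
    case (elim \<epsilon>)
    show ?case unfolding offset_clear_def
    proof
      fix k
      have "bisector \<sigma> (k mod n) = bisector \<sigma> k" "bisector \<sigma> (Suc (k mod n)) = bisector \<sigma> (Suc k)"
        using bisector_mod[of "k mod n" k] bisector_mod[of "Suc (k mod n)" "Suc k"]
        by (simp_all add: mod_Suc_eq)
      then show "beside \<sigma> k 0 (\<epsilon> *\<^sub>R bisector \<sigma> k) \<and> beside \<sigma> k 1 (\<epsilon> *\<^sub>R bisector \<sigma> (Suc k))"
        using elim[rule_format, of "k mod n"] n_pos by (simp add: beside_mod)
    qed
  qed
qed

definition eps where "eps = (SOME \<epsilon>. offset_clear 1 \<epsilon> \<and> offset_clear (-1) \<epsilon>)"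

lemma offset_clear_eps: "\<sigma> = 1 \<or> \<sigma> = -1 \<Longrightarrow> offset_clear \<sigma> eps"
proof -
  have "\<forall>\<^sub>F \<epsilon> in at_right 0. offset_clear 1 \<epsilon> \<and> offset_clear (-1) \<epsilon>"
    by (intro eventually_conj eventually_offset_clear) auto
  then have "\<exists>\<epsilon>. offset_clear 1 \<epsilon> \<and> offset_clear (-1) \<epsilon>"
    using eventually_happens'[OF trivial_limit_at_right_real] by blast
  then show "\<sigma> = 1 \<or> \<sigma> = -1 \<Longrightarrow> offset_clear \<sigma> eps"
    unfolding eps_def by (metis (mono_tags, lifting) someI_ex)
qed

definition offset :: "real \<Rightarrow> nat \<Rightarrow> real^2" where
  "offset \<sigma> k = vert k + eps *\<^sub>R bisector \<sigma> k"

lemma offset_mod: "i mod n = j mod n \<Longrightarrow> offset \<sigma> i = offset \<sigma> j"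
  unfolding offset_def using vert_mod bisector_mod by metis

lemma offset_segment_disjoint:
  assumes "\<sigma> = 1 \<or> \<sigma> = -1"
  shows "closed_segment (offset \<sigma> k) (offset \<sigma> (Suc k)) \<inter> P = {}"
proof -
  have "beside \<sigma> k 0 (eps *\<^sub>R bisector \<sigma> k)" "beside \<sigma> k 1 (eps *\<^sub>R bisector \<sigma> (Suc k))"
    using offset_clear_eps[OF assms] unfolding offset_clear_def by auto
  from beside_segment_disjoint[OF this] show ?thesis
    unfolding offset_def dir_def by (simp add: algebra_simps)
qed

section \<open>Reaching an offset chain\<close>

lemma vertices_not_collinear: "\<exists>i. (vert i - vert 0) \<bullet> normal 0 \<noteq> 0"
proof (rule ccontr)
  assume "\<not> ?thesis"
  then have "(vert i - vert 0) \<bullet> rot90 (dir 0) = 0" for i by (simp add: normal_def)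
  then have "vert i = vert 0 + c i *\<^sub>R dir 0" if "c = (\<lambda>i. ((vert i - vert 0) \<bullet> dir 0) / (dir 0 \<bullet> dir 0))" for c i
    using orthogonal_rot90_imp_parallel[OF dir_nonzero[of 0], of "vert i - vert 0"] that
    by (simp add: algebra_simps)
  then obtain c where vert_c: "\<And>i. vert i = vert 0 + c i *\<^sub>R dir 0" by blast
  have c_mod: "c i = c (i mod n)" for i
    using vert_c[of i] vert_c[of "i mod n"] vert_mod[of i "i mod n"] dir_nonzero[of 0] by simp
  have "Max (c ` {..<n}) \<in> c ` {..<n}" using n_pos by (intro Max_in) auto
  then obtain m where m: "c m = Max (c ` {..<n})" by auto
  have c_le: "c i \<le> c m" for i
    unfolding c_mod[of i] m using n_pos by (intro Max_ge) auto
  have dir_m: "dir m = (c (Suc m) - c m) *\<^sub>R dir 0"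
    using dir_def[of m] vert_c[of m] vert_c[of "Suc m"] by (simp add: algebra_simps)
  have dir_pred: "dir (m + n - 1) = (c m - c (m + n - 1)) *\<^sub>R dir 0"
    using vert_pred[of m] vert_c[of m] vert_c[of "m + n - 1"] by (simp add: algebra_simps)
  define A where "A = c m - c (Suc m)"
  define B where "B = c m - c (m + n - 1)"
  have "0 < A" using dir_m dir_nonzero[of m] c_le[of "Suc m"] unfolding A_def
    by (cases "c (Suc m) = c m") auto
  have "0 < B" using dir_pred dir_nonzero[of "m + n - 1"] c_le[of "m + n - 1"] unfolding B_def
    by (cases "c (m + n - 1) = c m") auto
  have "dir (Suc (m + n - 1)) = (- (A / B)) *\<^sub>R dir (m + n - 1)"
    unfolding dir_Suc_pred dir_m dir_pred A_def B_def using \<open>0 < B\<close> B_def by simp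
  then show False using no_reversal \<open>0 < A\<close> \<open>0 < B\<close> by (meson divide_pos_pos)
qed

lemma exists_edge_line_avoiding:
  assumes "a \<notin> P"
  shows "\<exists>j. (a - vert j) \<bullet> normal j \<noteq> 0"
proof (rule ccontr)
  assume "\<not> ?thesis"
  then have on_lines: "(a - vert j) \<bullet> normal j = 0" for j by auto
  have dirs: "dir i \<bullet> normal 0 = 0" for i
  proof (induction i)
    case (Suc i)
    define y where "y = a - vert (Suc i)"
    have "y \<noteq> 0" using assms vert_in_polygon[of "Suc i"] unfolding y_def by auto
    have "y = (a - vert i) - dir i" unfolding y_def dir_def by simp
    then have "y \<bullet> rot90 (dir i) = 0"
      using on_lines[of i] by (simp add: inner_diff_left normal_def)
    then obtain c1 where "y = c1 *\<^sub>R dir i" using orthogonal_rot90_imp_parallel dir_nonzero by metis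
    moreover have "dir (Suc i) \<bullet> rot90 y = 0"
      using on_lines[of "Suc i"] inner_rot90_left[of "dir (Suc i)" y] unfolding y_def normal_def
      by (simp add: inner_commute)
    then obtain c2 where "dir (Suc i) = c2 *\<^sub>R y" using orthogonal_rot90_imp_parallel \<open>y \<noteq> 0\<close> by metis
    ultimately show ?case using Suc by simp
  qed (simp add: normal_def)
  have "(vert i - vert 0) \<bullet> normal 0 = 0" for i
  proof (induction i)
    case (Suc i)
    have eq: "vert (Suc i) - vert 0 = (vert i - vert 0) + dir i" unfolding dir_def by simp
    show ?case unfolding eq inner_add_left using Suc dirs[of i] by simp
  qed simp
  then show False using vertices_not_collinear by blast
qed

lemma vert_on_segment_to_edge_unique:
  assumes "a \<notin> P" "(a - vert j) \<bullet> normal j \<noteq> 0"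
    and "vert i \<in> closed_segment a (vert j + u *\<^sub>R dir j)" "vert i \<in> closed_segment a (vert j + u' *\<^sub>R dir j)"
  shows "u = u'"
proof -
  define q where "q u = vert j + u *\<^sub>R dir j" for u
  have qN: "(q u - a) \<bullet> normal j = - ((a - vert j) \<bullet> normal j)" for u
    unfolding q_def normal_def by (simp add: inner_add_left inner_diff_left algebra_simps)
  obtain \<alpha> where "vert i = (1 - \<alpha>) *\<^sub>R a + \<alpha> *\<^sub>R q u"
    using assms(3) unfolding q_def in_segment by blast
  then have \<alpha>: "vert i - a = \<alpha> *\<^sub>R (q u - a)" by (simp add: algebra_simps)
  obtain \<beta> where "vert i = (1 - \<beta>) *\<^sub>R a + \<beta> *\<^sub>R q u'"
    using assms(4) unfolding q_def in_segment by blast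
  then have \<beta>: "vert i - a = \<beta> *\<^sub>R (q u' - a)" by (simp add: algebra_simps)
  have "(vert i - a) \<bullet> normal j = - (\<alpha> * ((a - vert j) \<bullet> normal j))"
    unfolding \<alpha> using qN[of u] by simp
  moreover have "(vert i - a) \<bullet> normal j = - (\<beta> * ((a - vert j) \<bullet> normal j))"
    unfolding \<beta> using qN[of u'] by simp
  ultimately have "\<alpha> * ((a - vert j) \<bullet> normal j) = \<beta> * ((a - vert j) \<bullet> normal j)" by linarith
  then have "\<alpha> = \<beta>" using assms(2) by simp
  moreover have "\<alpha> \<noteq> 0" using \<alpha> assms(1) vert_in_polygon[of i] by auto
  ultimately have "q u = q u'" using \<alpha> \<beta> by simp
  then show "u = u'" using dir_nonzero[of j] unfolding q_def by simp
qed

lemma exists_unobstructed_polygon_point: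
  assumes "a \<notin> P"
  obtains q where "q \<in> P" "\<And>i. vert i \<notin> closed_segment a q"
proof -
  obtain j where j: "(a - vert j) \<bullet> normal j \<noteq> 0" using exists_edge_line_avoiding[OF assms] by blast
  define B where "B i = {u. vert i \<in> closed_segment a (vert j + u *\<^sub>R dir j)}" for i
  have "finite (B i)" for i
  proof (cases "B i = {}")
    case False
    then obtain u where "u \<in> B i" by blast
    then have "B i \<subseteq> {u}" using vert_on_segment_to_edge_unique[OF assms j] unfolding B_def by blast
    then show ?thesis by (rule finite_subset) simp
  qed simp
  then have "finite (\<Union>i<n. B i)" by simp
  then have "\<not> {0<..<(1::real)} \<subseteq> (\<Union>i<n. B i)" by (meson finite_subset infinite_Ioo zero_less_one)
  then obtain u where u: "u \<in> {0<..<1}" "u \<notin> (\<Union>i<n. B i)" by blast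
  show ?thesis
  proof (rule that)
    have "vert j + u *\<^sub>R dir j \<in> edge j" unfolding mem_edge_iff using u(1) by (intro exI[of _ u]) auto
    then show "vert j + u *\<^sub>R dir j \<in> P" using edge_subset_polygon by blast
    fix i
    have "u \<notin> B (i mod n)" using u(2) n_pos by simp
    then show "vert i \<notin> closed_segment a (vert j + u *\<^sub>R dir j)"
      unfolding B_def using vert_mod[of i "i mod n"] by simp
  qed
qed

lemma move_along_edge:
  assumes "0 < lam" "lam < 1" "v \<bullet> normal k = 0"
  obtains s where "0 < s" "s \<le> 1" "vert k + lam *\<^sub>R dir k + s *\<^sub>R v \<in> edge k"
proof -
  obtain c where c: "v = c *\<^sub>R dir k"
    using orthogonal_rot90_imp_parallel[OF dir_nonzero] assms(3) unfolding normal_def by metis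
  define m where "m = min lam (1 - lam)"
  define s where "s = min 1 (m / (\<bar>c\<bar> + 1))"
  have "0 < m" unfolding m_def using assms by simp
  then have s: "0 < s" "s \<le> 1" unfolding s_def by auto
  have "s \<le> m / (\<bar>c\<bar> + 1)" unfolding s_def by simp
  then have "s * (\<bar>c\<bar> + 1) \<le> m" by (simp add: field_simps)
  then have "\<bar>s * c\<bar> < m" using s by (simp add: abs_mult algebra_simps)
  moreover have "m \<le> lam" "m \<le> 1 - lam" unfolding m_def by simp_all
  ultimately have "0 \<le> lam + s * c" "lam + s * c \<le> 1" by (simp_all add: abs_less_iff)
  moreover have "vert k + lam *\<^sub>R dir k + s *\<^sub>R v = vert k + (lam + s * c) *\<^sub>R dir k"
    using c by (simp add: algebra_simps)
  ultimately have "vert k + lam *\<^sub>R dir k + s *\<^sub>R v \<in> edge k"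
    unfolding mem_edge_iff by blast
  with s show ?thesis by (rule that)
qed

lemma first_hit_edge:
  assumes a: "a \<notin> P" and q: "q \<in> P" and unobstructed: "\<And>i. vert i \<notin> closed_segment a q"
  obtains k lam v where "0 < lam" "lam < 1" "v \<bullet> normal k \<noteq> 0"
    "\<And>s. 0 < s \<Longrightarrow> s \<le> 1 \<Longrightarrow> closed_segment a (vert k + lam *\<^sub>R dir k + s *\<^sub>R v) \<inter> P = {}"
proof -
  obtain h where h: "h \<in> closed_segment a q" "h \<in> P"
    and clear: "\<And>s. 0 < s \<Longrightarrow> s \<le> 1 \<Longrightarrow> closed_segment a (h + s *\<^sub>R (a - h)) \<inter> P = {}"
    using first_hit_segment[OF compact_imp_closed[OF compact_polygon] q a] by blast
  obtain k where "h \<in> edge k" using h(2) unfolding polygon_eq_Union_edge by auto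
  then obtain lam where lam: "0 \<le> lam" "lam \<le> 1" "h = vert k + lam *\<^sub>R dir k"
    by (auto simp: mem_edge_iff)
  have "h \<noteq> vert k" "h \<noteq> vert (Suc k)" using h(1) unobstructed by auto
  then have "lam \<noteq> 0" "lam \<noteq> 1" using lam(3) by (auto simp: dir_def)
  then have "0 < lam" "lam < 1" using lam(1,2) by auto
  moreover have "(a - h) \<bullet> normal k \<noteq> 0"
  proof
    assume "(a - h) \<bullet> normal k = 0"
    then obtain s where s: "0 < s" "s \<le> 1" "h + s *\<^sub>R (a - h) \<in> edge k"
      using move_along_edge \<open>0 < lam\<close> \<open>lam < 1\<close> lam(3) by metis
    then show False using clear[OF s(1,2)] edge_subset_polygon by blast
  qed
  ultimately show ?thesis using that clear lam(3) by blast
qed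

lemma approach_offset:
  assumes "a \<notin> P"
  obtains \<sigma> k x where "\<sigma> = 1 \<or> \<sigma> = -1" "closed_segment a x \<inter> P = {}"
    "closed_segment x (offset \<sigma> k) \<inter> P = {}" "closed_segment x (offset \<sigma> (Suc k)) \<inter> P = {}"
proof -
  obtain q where q: "q \<in> P" "\<And>i. vert i \<notin> closed_segment a q"
    by (rule exists_unobstructed_polygon_point[OF assms]) auto
  obtain k lam v where kv: "0 < lam" "lam < 1" "v \<bullet> normal k \<noteq> 0"
    "\<And>s. 0 < s \<Longrightarrow> s \<le> 1 \<Longrightarrow> closed_segment a (vert k + lam *\<^sub>R dir k + s *\<^sub>R v) \<inter> P = {}"
    by (rule first_hit_edge[OF assms q]) auto
  define \<sigma> :: real where "\<sigma> = (if 0 < v \<bullet> normal k then 1 else -1)"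
  have \<sigma>: "\<sigma> = 1 \<or> \<sigma> = -1" unfolding \<sigma>_def by auto
  have "0 < v \<bullet> side_normal \<sigma> k" unfolding \<sigma>_def side_normal_def using kv(3) by auto
  then have "\<forall>\<^sub>F s in at_right 0. beside \<sigma> k lam (s *\<^sub>R v)"
    using kv(1,2) by (intro eventually_beside) auto
  moreover have "\<forall>\<^sub>F s in at_right (0::real). s \<in> {0<..<1}" by (rule eventually_at_right_real) simp
  ultimately have "\<forall>\<^sub>F s in at_right 0. beside \<sigma> k lam (s *\<^sub>R v) \<and> s \<in> {0<..<1}"
    by (rule eventually_conj)
  then have "\<exists>s. beside \<sigma> k lam (s *\<^sub>R v) \<and> s \<in> {0<..<1}"
    by (rule eventually_happens'[OF trivial_limit_at_right_real])
  then obtain s where s: "beside \<sigma> k lam (s *\<^sub>R v)" "0 < s" "s \<le> 1" by auto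
  have ends: "beside \<sigma> k 0 (eps *\<^sub>R bisector \<sigma> k)" "beside \<sigma> k 1 (eps *\<^sub>R bisector \<sigma> (Suc k))"
    using offset_clear_eps[OF \<sigma>] unfolding offset_clear_def by auto
  have "offset \<sigma> k = vert k + 0 *\<^sub>R dir k + eps *\<^sub>R bisector \<sigma> k"
    "offset \<sigma> (Suc k) = vert k + 1 *\<^sub>R dir k + eps *\<^sub>R bisector \<sigma> (Suc k)"
    unfolding offset_def by (simp_all add: dir_def)
  then show ?thesis
    using that[OF \<sigma> kv(4)[OF s(2,3)]] beside_segment_disjoint[OF s(1) ends(1)]
      beside_segment_disjoint[OF s(1) ends(2)] by metis
qed

section \<open>The two sides\<close>

definition side :: "real \<Rightarrow> (real^2) set" where
  "side \<sigma> = connected_component_set (- P) (offset \<sigma> 0)"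

lemma offset_segment_subset_side:
  assumes "\<sigma> = 1 \<or> \<sigma> = -1"
  shows "closed_segment (offset \<sigma> k) (offset \<sigma> (Suc k)) \<subseteq> side \<sigma>"
proof (induction k)
  case 0
  have "closed_segment (offset \<sigma> 0) (offset \<sigma> 1) \<subseteq> - P"
    using offset_segment_disjoint[OF assms, of 0] by auto
  then show ?case unfolding side_def
    by (intro closed_segment_subset_connected_component) auto
next
  case (Suc k)
  have "closed_segment (offset \<sigma> (Suc k)) (offset \<sigma> (Suc (Suc k))) \<subseteq> - P"
    using offset_segment_disjoint[OF assms, of "Suc k"] by auto
  then show ?case using Suc unfolding side_def
    by (intro closed_segment_subset_connected_component) auto
qed

lemma approach_side:
  assumes "a \<notin> P"
  obtains \<sigma> k x where "\<sigma> = 1 \<or> \<sigma> = -1" "closed_segment a x \<subseteq> side \<sigma>"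
    "closed_segment x (offset \<sigma> k) \<subseteq> side \<sigma>" "closed_segment x (offset \<sigma> (Suc k)) \<subseteq> side \<sigma>"
proof -
  obtain \<sigma> k x where \<sigma>: "\<sigma> = 1 \<or> \<sigma> = -1" and segs: "closed_segment a x \<inter> P = {}"
    "closed_segment x (offset \<sigma> k) \<inter> P = {}" "closed_segment x (offset \<sigma> (Suc k)) \<inter> P = {}"
    by (rule approach_offset[OF assms]) auto
  have "offset \<sigma> k \<in> side \<sigma>" using offset_segment_subset_side[OF \<sigma>, of k] by auto
  then have k_seg: "closed_segment x (offset \<sigma> k) \<subseteq> side \<sigma>"
    using segs(2) unfolding side_def by (intro closed_segment_subset_connected_component) auto
  then have "x \<in> side \<sigma>" by auto
  then have "closed_segment a x \<subseteq> side \<sigma>" "closed_segment x (offset \<sigma> (Suc k)) \<subseteq> side \<sigma>"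
    using segs(1,3) unfolding side_def
    by (intro closed_segment_subset_connected_component; auto)+
  then show ?thesis using that[OF \<sigma> _ k_seg] by blast
qed

lemma component_eq_side:
  "a \<in> side \<sigma> \<Longrightarrow> connected_component_set (- P) a = side \<sigma>"
  unfolding side_def by (rule connected_component_eq)

lemma UNIV_eq_polygon_Un_sides: "UNIV = P \<union> side 1 \<union> side (-1)"
proof -
  have "a \<in> side 1 \<union> side (-1)" if a: "a \<notin> P" for a
  proof -
    obtain \<sigma> k x where "\<sigma> = 1 \<or> \<sigma> = -1" "closed_segment a x \<subseteq> side \<sigma>"
      "closed_segment x (offset \<sigma> k) \<subseteq> side \<sigma>" "closed_segment x (offset \<sigma> (Suc k)) \<subseteq> side \<sigma>"
      by (rule approach_side[OF a])
    then show ?thesis by auto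
  qed
  then show ?thesis by auto
qed

lemma sides_distinct: "side 1 \<noteq> side (-1)"
proof
  assume "side 1 = side (-1)"
  then have "- P = side 1"
    using UNIV_eq_polygon_Un_sides connected_component_subset[of "- P"] unfolding side_def by blast
  then have "connected (- P)" unfolding side_def by (metis connected_connected_component)
  then show False using polygon_separates_plane[OF three_le_n simple] by simp
qed

lemma inside_in_one_component:
  assumes "a \<in> inside P" "b \<in> inside P"
  shows "b \<in> connected_component_set (- P) a"
proof (rule ccontr)
  assume different: "b \<notin> connected_component_set (- P) a"
  have "a \<notin> P" "b \<notin> P" using assms inside_no_overlap[of P] by blast+
  then have "a \<in> side 1 \<union> side (-1)" "b \<in> side 1 \<union> side (-1)"
    using UNIV_eq_polygon_Un_sides by blast+
  then have "a \<in> side 1 \<and> b \<in> side (-1) \<or> a \<in> side (-1) \<and> b \<in> side 1"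
    using different component_eq_side by auto
  then have "side 1 \<union> side (-1) = connected_component_set (- P) a \<union> connected_component_set (- P) b"
    by (metis component_eq_side sup_commute)
  moreover have "bounded (connected_component_set (- P) x)" if "x \<in> inside P" for x
    using that unfolding inside_def by auto
  ultimately have "bounded (P \<union> side 1 \<union> side (-1))"
    using assms compact_imp_bounded[OF compact_polygon] by (simp add: sup_assoc)
  then show False using UNIV_eq_polygon_Un_sides not_bounded_UNIV by metis
qed

lemma inside_eq_component: "a \<in> inside P \<Longrightarrow> inside P = connected_component_set (- P) a"
  using inside_in_one_component inside_same_component[of P a] by auto

lemma outside_eq_component: "a \<in> outside P \<Longrightarrow> outside P = connected_component_set (- P) a"
proof
  assume a: "a \<in> outside P"
  have "connected (outside P)"
    using compact_imp_bounded[OF compact_polygon] by (intro connected_outside) auto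
  moreover have "outside P \<subseteq> - P" using outside_no_overlap by blast
  ultimately show "outside P \<subseteq> connected_component_set (- P) a"
    using a by (intro connected_component_maximal)
  show "connected_component_set (- P) a \<subseteq> outside P"
    using outside_same_component[of P a] a by auto
qed

text \<open>The bound counts two segments at either end and at most \<open>\<lfloor>n/2\<rfloor> - 1\<close> edges of the
offset chain in between.\<close>

lemma polygonal_path_in_component:
  assumes "a \<notin> P" "b \<in> connected_component_set (- P) a"
  shows "polygonal_path_in (connected_component_set (- P) a) a b (n div 2 + 3)"
proof -
  define S where "S = connected_component_set (- P) a"
  obtain \<sigma> ka xa where \<sigma>: "\<sigma> = 1 \<or> \<sigma> = -1" and a_segs: "closed_segment a xa \<subseteq> side \<sigma>"
    "closed_segment xa (offset \<sigma> ka) \<subseteq> side \<sigma>" "closed_segment xa (offset \<sigma> (Suc ka)) \<subseteq> side \<sigma>"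
    by (rule approach_side[OF assms(1)])
  have "b \<notin> P" using assms(2) connected_component_subset by blast
  then obtain \<sigma>' kb xb where \<sigma>': "\<sigma>' = 1 \<or> \<sigma>' = -1" and b_segs: "closed_segment b xb \<subseteq> side \<sigma>'"
    "closed_segment xb (offset \<sigma>' kb) \<subseteq> side \<sigma>'" "closed_segment xb (offset \<sigma>' (Suc kb)) \<subseteq> side \<sigma>'"
    by (rule approach_side)
  have S_side: "S = side \<sigma>" unfolding S_def using a_segs(1) by (intro component_eq_side) auto
  have "S = connected_component_set (- P) b" unfolding S_def using connected_component_eq[OF assms(2)] by simp
  also have "\<dots> = side \<sigma>'" using b_segs(1) by (intro component_eq_side) auto
  finally have "side \<sigma>' = side \<sigma>" using S_side by simp
  then have "\<sigma>' = \<sigma>" using \<sigma> \<sigma>' sides_distinct by (elim disjE) simp_all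
  have segs: "closed_segment (offset \<sigma> k) (offset \<sigma> (Suc k)) \<subseteq> S" for k
    using offset_segment_subset_side[OF \<sigma>] S_side by simp
  have "2 \<le> n" using three_le_n by simp
  then obtain i j m where i: "i = ka \<or> i = Suc ka" and j: "j = kb \<or> j = Suc kb" and "m + 1 \<le> n div 2"
    and chain: "polygonal_path_in S (offset \<sigma> i) (offset \<sigma> j) m"
    by (rule polygonal_path_in_cyclic[where W = "offset \<sigma>" and i = ka and j = kb, OF _ segs offset_mod])
  have a_xa: "polygonal_path_in S a xa 1"
    using a_segs(1) S_side by (intro polygonal_path_in_segment) simp
  have xa_chain: "polygonal_path_in S xa (offset \<sigma> i) 1"
    using i a_segs(2,3) S_side by (intro polygonal_path_in_segment) auto
  have chain_xb: "polygonal_path_in S (offset \<sigma> j) xb 1"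
    using j b_segs(2,3) S_side \<open>\<sigma>' = \<sigma>\<close> by (intro polygonal_path_in_segment) (auto simp: closed_segment_commute)
  have xb_b: "polygonal_path_in S xb b 1"
    using b_segs(1) S_side \<open>\<sigma>' = \<sigma>\<close> by (intro polygonal_path_in_segment) (simp add: closed_segment_commute)
  have "polygonal_path_in S a b (1 + 1 + m + 1 + 1)"
    by (intro polygonal_path_in_trans[OF _ xb_b] polygonal_path_in_trans[OF _ chain_xb]
        polygonal_path_in_trans[OF _ chain] polygonal_path_in_trans[OF a_xa xa_chain])
  moreover have "b \<in> S" using assms(2) S_def by simp
  moreover have "1 + 1 + m + 1 + 1 \<le> n div 2 + 3" using \<open>m + 1 \<le> n div 2\<close> by simp
  ultimately show ?thesis unfolding S_def by (rule polygonal_path_in_le)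
qed

lemma poldiam_component_le:
  assumes "\<And>a. a \<in> U \<Longrightarrow> U = connected_component_set (- P) a"
  shows "poldiam U \<le> enat (n div 2 + 3)"
proof (rule poldiam_le)
  fix a b assume "a \<in> U" "b \<in> U"
  then have "a \<notin> P" "b \<in> connected_component_set (- P) a"
    using assms connected_component_subset by blast+
  then have "polygonal_path_in U a b (n div 2 + 3)"
    using polygonal_path_in_component assms[OF \<open>a \<in> U\<close>] by simp
  then show "polydist U a b \<le> enat (n div 2 + 3)" by (rule polydist_le)
qed

end

theorem theorem3p1:
  fixes n :: nat and p :: "nat \<Rightarrow> real^2"
  assumes "n \<ge> 3" and "simple_closed_polygon n p"
  shows "poldiam (inside (polygon n p)) \<le> enat (n div 2 + 3)
       \<and> poldiam (outside (polygon n p)) \<le> enat (n div 2 + 3)"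
proof -
  interpret simple_polygon n p using assms by unfold_locales
  show ?thesis
    using poldiam_component_le inside_eq_component outside_eq_component by blast
qed

end
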